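(* Let $\mathit{VI}$ be a finite set of variables with $\#\mathit{VI}=n$ and $k\in\mathbb{N}$ with $1\le k\le n$. Then $\mathrm{dAtoms}(\mathit{TS}_k)=\{\,sh\in\mathrm{MI}(\mathit{TSD}_k)\mid \mathit{VI}\notin sh\,\}$.
   Context: $\mathit{SG}=\wp(\mathit{VI})\setminus\{\emptyset\}$, $\mathit{SH}=\wp(\mathit{SG})$ ordered by inclusion. $\mathrm{tuples}_k(S)=\{T\subseteq S\mid\#T=k\}$, $\mathrm{tuples}_k(sh)=\bigcup_{S'\in sh}\mathrm{tuples}_k(S')$, $\rho_{\mathit{TS}_k}(sh)=\{S\in\mathit{SG}\mid\mathrm{tuples}_k(S)\subseteq\mathrm{tuples}_k(sh)\}$, $\mathit{TS}_k=\rho_{\mathit{TS}_k}(\mathit{SH})$. $\rho_{\mathit{TSD}_k}(sh)=\{\,S\in\mathit{SG}\mid \forall T\subseteq S:\ \#T<k\implies S=\bigcup\{U\in sh\mid T\subseteq U\subseteq S\}\,\}$, $\mathit{TSD}_k=\rho_{\mathit{TSD}_k}(\mathit{SH})$. Both are complete lattices under inclusion with top $\mathit{SG}$. $\mathrm{MI}(C)$ denotes the meet-irreducible elements of a complete lattice $C$ ($x$ with $x=y\wedge z\Rightarrow x=y$ or $x=z$), and $\mathrm{dAtoms}(C)$ its dual-atoms ($x\ne\top$ with $x\le y<\top\Rightarrow x=y$). *)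

theory Defs
  imports Main
begin

definition SG :: "'a set \<Rightarrow> 'a set set" where
  "SG VI = Pow VI - {{}}"

definition SH :: "'a set \<Rightarrow> 'a set set set" where
  "SH VI = Pow (SG VI)"

definition tuples :: "nat \<Rightarrow> 'a set \<Rightarrow> 'a set set" where
  "tuples k S = {T. T \<subseteq> S \<and> card T = k}"

definition tuples_sh :: "nat \<Rightarrow> 'a set set \<Rightarrow> 'a set set" where
  "tuples_sh k sh = (\<Union>S'\<in>sh. tuples k S')"

definition rho_TS :: "'a set \<Rightarrow> nat \<Rightarrow> 'a set set \<Rightarrow> 'a set set" where
  "rho_TS VI k sh = {S \<in> SG VI. tuples k S \<subseteq> tuples_sh k sh}"

definition TS :: "'a set \<Rightarrow> nat \<Rightarrow> 'a set set set" where
  "TS VI k = rho_TS VI k ` SH VI"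

definition rho_TSD :: "'a set \<Rightarrow> nat \<Rightarrow> 'a set set \<Rightarrow> 'a set set" where
  "rho_TSD VI k sh = {S \<in> SG VI. \<forall>T. T \<subseteq> S \<longrightarrow> card T < k \<longrightarrow>
       S = \<Union>{U \<in> sh. T \<subseteq> U \<and> U \<subseteq> S}}"

definition TSD :: "'a set \<Rightarrow> nat \<Rightarrow> 'a set set set" where
  "TSD VI k = rho_TSD VI k ` SH VI"

definition is_meet_in :: "'b set set \<Rightarrow> 'b set \<Rightarrow> 'b set \<Rightarrow> 'b set \<Rightarrow> bool" where
  "is_meet_in C x y z \<longleftrightarrow> x \<in> C \<and> x \<subseteq> y \<and> x \<subseteq> z \<and>
     (\<forall>w\<in>C. w \<subseteq> y \<and> w \<subseteq> z \<longrightarrow> w \<subseteq> x)"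

definition MI :: "'b set set \<Rightarrow> 'b set set" where
  "MI C = {x \<in> C. \<forall>y\<in>C. \<forall>z\<in>C. is_meet_in C x y z \<longrightarrow> x = y \<or> x = z}"

definition dAtoms :: "'b set set \<Rightarrow> 'b set \<Rightarrow> 'b set set" where
  "dAtoms C tp = {x \<in> C. x \<noteq> tp \<and> (\<forall>y\<in>C. x \<subseteq> y \<and> y \<subset> tp \<longrightarrow> x = y)}"

end

theory Submission
  imports Defs
begin

text \<open>Both sides consist of the sharing sets \<open>avoiding VI T\<close> of all groups not containing \<open>T\<close>,
  for the \<open>k\<close>-subsets \<open>T\<close> of \<open>VI\<close>. An element of \<open>TS\<^sub>k\<close> contains every \<open>k\<close>-subset of its
  members, and it is the top once it contains all \<open>k\<close>-subsets; so the dual atoms are the elements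
  missing exactly one \<open>k\<close>-subset \<open>T\<close>, namely \<open>avoiding VI T\<close>.
  In \<open>TSD\<^sub>k\<close>, the fixpoint condition puts \<open>VI\<close> into every element that covers all \<open>k\<close>-subsets.
  Hence an element \<open>x\<close> without \<open>VI\<close> lies below some \<open>avoiding VI T\<close> and is the meet of it and
  \<open>insert VI x\<close>, so meet-irreducibility forces \<open>x = avoiding VI T\<close>. Conversely, everything strictly
  above \<open>avoiding VI T\<close> contains \<open>VI\<close>, so \<open>avoiding VI T\<close> has a unique upper cover.\<close>

definition avoiding :: "'a set \<Rightarrow> 'a set \<Rightarrow> 'a set set" where
  "avoiding VI T = {S \<in> SG VI. \<not> T \<subseteq> S}"

lemma mem_SG_iff: "S \<in> SG VI \<longleftrightarrow> S \<subseteq> VI \<and> S \<noteq> {}"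
  by (auto simp: SG_def)

lemma tuples_card_self: "finite T \<Longrightarrow> tuples (card T) T = {T}"
  by (auto simp: tuples_def dest: card_subset_eq)

lemma avoiding_subset_SG: "avoiding VI T \<subseteq> SG VI"
  by (auto simp: avoiding_def)

lemma avoiding_neq_SG: "T \<subseteq> VI \<Longrightarrow> T \<noteq> {} \<Longrightarrow> avoiding VI T \<noteq> SG VI"
  by (auto simp: avoiding_def mem_SG_iff)

lemma tuple_eq_if_subset:
  assumes "T \<in> tuples k VI" "T' \<in> tuples k VI" "T \<subseteq> T'" "1 \<le> k"
  shows "T = T'"
proof (rule card_subset_eq)
  show "finite T'" "card T = card T'"
    using assms by (auto simp: tuples_def intro: card_ge_0_finite)
qed (rule assms(3))

lemma TS_subset_SG: "y \<in> TS VI k \<Longrightarrow> y \<subseteq> SG VI"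
  by (auto simp: TS_def rho_TS_def)

lemma TS_closed_tuples:
  assumes y: "y \<in> TS VI k" and "S \<in> y" "T \<in> tuples k S" and k: "1 \<le> k"
  shows "T \<in> y"
proof -
  obtain sh where y_eq: "y = rho_TS VI k sh"
    using y by (auto simp: TS_def)
  have "finite T" "T \<noteq> {}" "T \<subseteq> S" "card T = k"
    using \<open>T \<in> tuples k S\<close> k by (auto simp: tuples_def intro: card_ge_0_finite)
  moreover have "S \<in> SG VI" "tuples k S \<subseteq> tuples_sh k sh"
    using \<open>S \<in> y\<close> y_eq by (auto simp: rho_TS_def)
  ultimately show "T \<in> y"
    using \<open>T \<in> tuples k S\<close> y_eq tuples_card_self[of T] by (auto simp: rho_TS_def mem_SG_iff)
qed

lemma TS_eq_SG_if_tuples_subset: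
  assumes y: "y \<in> TS VI k" and all: "tuples k VI \<subseteq> y"
  shows "y = SG VI"
proof
  obtain sh where y_eq: "y = rho_TS VI k sh"
    using y by (auto simp: TS_def)
  show "SG VI \<subseteq> y"
  proof
    fix S assume S: "S \<in> SG VI"
    have "tuples k S \<subseteq> tuples_sh k sh"
    proof
      fix T assume T: "T \<in> tuples k S"
      then have "T \<in> y" "T \<in> tuples k T"
        using S all by (auto simp: tuples_def mem_SG_iff)
      then show "T \<in> tuples_sh k sh"
        using y_eq by (auto simp: rho_TS_def)
    qed
    then show "S \<in> y"
      using S y_eq by (auto simp: rho_TS_def)
  qed
qed (rule TS_subset_SG[OF y])

lemma TS_subset_avoiding:
  assumes "y \<in> TS VI k" "T \<notin> y" "card T = k" "1 \<le> k"
  shows "y \<subseteq> avoiding VI T"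
  using assms TS_closed_tuples[of y VI k _ T] TS_subset_SG[of y VI k]
  by (auto simp: avoiding_def tuples_def)

lemma avoiding_in_TS:
  assumes "card T = k"
  shows "avoiding VI T \<in> TS VI k"
proof -
  have "rho_TS VI k (avoiding VI T) = avoiding VI T"
  proof (intro subset_antisym subsetI)
    fix S assume "S \<in> rho_TS VI k (avoiding VI T)"
    then have S: "S \<in> SG VI" "tuples k S \<subseteq> tuples_sh k (avoiding VI T)"
      by (auto simp: rho_TS_def)
    have "\<not> T \<subseteq> S"
    proof
      assume "T \<subseteq> S"
      then have "T \<in> tuples_sh k (avoiding VI T)"
        using S(2) assms by (auto simp: tuples_def)
      then show False
        by (auto simp: tuples_sh_def tuples_def avoiding_def)
    qed
    then show "S \<in> avoiding VI T"
      using S(1) by (simp add: avoiding_def)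
  next
    fix S assume "S \<in> avoiding VI T"
    then show "S \<in> rho_TS VI k (avoiding VI T)"
      by (auto simp: rho_TS_def avoiding_def tuples_sh_def)
  qed
  then show ?thesis
    using avoiding_subset_SG unfolding TS_def SH_def by (metis PowI image_eqI)
qed

lemma dAtoms_TS:
  assumes k: "1 \<le> k"
  shows "dAtoms (TS VI k) (SG VI) = avoiding VI ` tuples k VI"
proof (intro subset_antisym subsetI)
  fix x assume "x \<in> dAtoms (TS VI k) (SG VI)"
  then have x: "x \<in> TS VI k" "x \<noteq> SG VI"
    and maximal: "\<And>y. y \<in> TS VI k \<Longrightarrow> x \<subseteq> y \<Longrightarrow> y \<subset> SG VI \<Longrightarrow> x = y"
    by (auto simp: dAtoms_def)
  obtain T where T: "T \<in> tuples k VI" "T \<notin> x"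
    using TS_eq_SG_if_tuples_subset[OF x(1)] x(2) by blast
  then have "T \<subseteq> VI" "T \<noteq> {}" "card T = k"
    using k by (auto simp: tuples_def)
  then have "avoiding VI T \<in> TS VI k" "avoiding VI T \<subset> SG VI"
    using avoiding_in_TS avoiding_neq_SG avoiding_subset_SG by blast+
  moreover have "x \<subseteq> avoiding VI T"
    using TS_subset_avoiding[OF x(1) T(2) \<open>card T = k\<close> k] .
  ultimately have "x = avoiding VI T"
    using maximal by blast
  then show "x \<in> avoiding VI ` tuples k VI"
    using T(1) by blast
next
  fix x assume "x \<in> avoiding VI ` tuples k VI"
  then obtain T where T: "T \<in> tuples k VI" and x_eq: "x = avoiding VI T"
    by blast
  have "T \<subseteq> VI" "T \<noteq> {}" "card T = k"
    using T k by (auto simp: tuples_def)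
  then have "x \<in> TS VI k" "x \<noteq> SG VI"
    using avoiding_neq_SG avoiding_in_TS x_eq by blast+
  moreover have "x = y" if y: "y \<in> TS VI k" "x \<subseteq> y" "y \<subset> SG VI" for y
  proof -
    obtain T' where T': "T' \<in> tuples k VI" "T' \<notin> y"
      using TS_eq_SG_if_tuples_subset[OF y(1)] y(3) by blast
    then have "T' \<in> SG VI"
      using k by (auto simp: tuples_def mem_SG_iff)
    then have "T \<subseteq> T'"
      using T' y(2) x_eq by (auto simp: avoiding_def)
    then have "T = T'"
      using tuple_eq_if_subset[OF T T'(1) _ k] by blast
    then show "x = y"
      using TS_subset_avoiding[OF y(1) T'(2)] T' k y(2) x_eq by (auto simp: tuples_def)
  qed
  ultimately show "x \<in> dAtoms (TS VI k) (SG VI)"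
    unfolding dAtoms_def by blast
qed

lemma mem_rho_TSD_iff:
  "S \<in> rho_TSD VI k sh \<longleftrightarrow> S \<in> SG VI \<and>
     (\<forall>T a. T \<subseteq> S \<longrightarrow> card T < k \<longrightarrow> a \<in> S \<longrightarrow> (\<exists>U\<in>sh. T \<subseteq> U \<and> U \<subseteq> S \<and> a \<in> U))"
  unfolding rho_TSD_def by blast

lemma rho_TSD_covers:
  assumes "S \<in> rho_TSD VI k sh" "T \<subseteq> S" "card T < k" "a \<in> S"
  shows "\<exists>U\<in>sh. T \<subseteq> U \<and> U \<subseteq> S \<and> a \<in> U"
  using assms unfolding mem_rho_TSD_iff by blast

lemma rho_TSD_subset_SG: "rho_TSD VI k sh \<subseteq> SG VI"
  by (auto simp: rho_TSD_def)

lemma rho_TSD_increasing: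
  assumes "sh \<subseteq> SG VI"
  shows "sh \<subseteq> rho_TSD VI k sh"
proof
  fix S assume "S \<in> sh"
  with assms show "S \<in> rho_TSD VI k sh"
    unfolding mem_rho_TSD_iff by blast
qed

lemma rho_TSD_idem: "rho_TSD VI k (rho_TSD VI k sh) = rho_TSD VI k sh"
proof
  show "rho_TSD VI k (rho_TSD VI k sh) \<subseteq> rho_TSD VI k sh"
  proof
    fix S assume S: "S \<in> rho_TSD VI k (rho_TSD VI k sh)"
    show "S \<in> rho_TSD VI k sh"
      unfolding mem_rho_TSD_iff
    proof (intro conjI allI impI)
      show "S \<in> SG VI"
        using S rho_TSD_subset_SG by blast
      fix T a assume T: "T \<subseteq> S" "card T < k" and "a \<in> S"
      then obtain U where U: "U \<in> rho_TSD VI k sh" "T \<subseteq> U" "U \<subseteq> S" "a \<in> U"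
        using rho_TSD_covers[OF S] by blast
      then obtain V where "V \<in> sh" "T \<subseteq> V" "V \<subseteq> U" "a \<in> V"
        using rho_TSD_covers[OF U(1) U(2) T(2) U(4)] by blast
      then show "\<exists>V\<in>sh. T \<subseteq> V \<and> V \<subseteq> S \<and> a \<in> V"
        using U(3) by blast
    qed
  qed
qed (rule rho_TSD_increasing[OF rho_TSD_subset_SG])

lemma TSD_iff_fixpoint: "x \<in> TSD VI k \<longleftrightarrow> x \<subseteq> SG VI \<and> rho_TSD VI k x = x"
  unfolding TSD_def SH_def using rho_TSD_idem rho_TSD_subset_SG by blast

lemma avoiding_in_TSD:
  assumes "0 < card T" "card T \<le> k"
  shows "avoiding VI T \<in> TSD VI k"
proof -
  have "S \<in> avoiding VI T" if S: "S \<in> rho_TSD VI k (avoiding VI T)" for S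
  proof (rule ccontr)
    assume "S \<notin> avoiding VI T"
    then have "T \<subseteq> S"
      using S rho_TSD_subset_SG by (auto simp: avoiding_def)
    obtain t where t: "t \<in> T"
      using assms(1) by fastforce
    have "card (T - {t}) < k"
      using card_Diff1_less[OF card_ge_0_finite[OF assms(1)] t] assms(2) by linarith
    moreover have "T - {t} \<subseteq> S" "t \<in> S"
      using t \<open>T \<subseteq> S\<close> by auto
    \<comment> \<open>a group covering \<open>t\<close> above \<open>T - {t}\<close> would contain all of \<open>T\<close>\<close>
    ultimately obtain U where "U \<in> avoiding VI T" "T - {t} \<subseteq> U" "t \<in> U"
      using rho_TSD_covers[OF S] by blast
    then show False
      by (auto simp: avoiding_def)
  qed
  then have "rho_TSD VI k (avoiding VI T) = avoiding VI T"
    using rho_TSD_increasing[OF avoiding_subset_SG] by blast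
  then show ?thesis
    using avoiding_subset_SG by (simp add: TSD_iff_fixpoint)
qed

lemma insert_VI_in_TSD:
  assumes x: "x \<in> TSD VI k" and "VI \<noteq> {}"
  shows "insert VI x \<in> TSD VI k"
proof -
  have "x \<subseteq> SG VI" and x_fixed: "rho_TSD VI k x = x"
    using x by (auto simp: TSD_iff_fixpoint)
  then have insert_SG: "insert VI x \<subseteq> SG VI"
    using \<open>VI \<noteq> {}\<close> by (auto simp: mem_SG_iff)
  have "S \<in> insert VI x" if S: "S \<in> rho_TSD VI k (insert VI x)" for S
  proof (cases "S = VI")
    case False
    then have "\<not> VI \<subseteq> S"
      using S rho_TSD_subset_SG by (fastforce simp: mem_SG_iff)
    then have "S \<in> rho_TSD VI k x"
      using S unfolding mem_rho_TSD_iff by blast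
    then show ?thesis
      using x_fixed by simp
  qed simp
  then have "rho_TSD VI k (insert VI x) = insert VI x"
    using rho_TSD_increasing[OF insert_SG] by blast
  then show ?thesis
    using insert_SG by (simp add: TSD_iff_fixpoint)
qed

lemma VI_in_TSD_if_covers_tuples:
  assumes fin: "finite VI" and "VI \<noteq> {}" and k: "k \<le> card VI" and x: "x \<in> TSD VI k"
    and covers: "\<And>T. T \<in> tuples k VI \<Longrightarrow> \<exists>S\<in>x. T \<subseteq> S"
  shows "VI \<in> x"
proof -
  have x_SG: "x \<subseteq> SG VI" and x_fixed: "rho_TSD VI k x = x"
    using x by (auto simp: TSD_iff_fixpoint)
  have "\<exists>S\<in>x. T \<subseteq> S \<and> S \<subseteq> VI \<and> a \<in> S"
    if T: "T \<subseteq> VI" "card T < k" and a: "a \<in> VI" for T a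
  proof -
    have "finite T"
      using T(1) fin by (rule finite_subset)
    then have "card (insert a T) \<le> k"
      using T(2) by (simp add: card_insert_if)
    moreover have "insert a T \<subseteq> VI"
      using a T(1) by blast
    ultimately obtain B where B: "insert a T \<subseteq> B" "B \<subseteq> VI" "card B = k"
      using exists_subset_between[OF _ k _ fin] by blast
    then obtain S where "S \<in> x" "B \<subseteq> S"
      using covers[of B] by (auto simp: tuples_def)
    moreover have "S \<in> SG VI"
      using \<open>S \<in> x\<close> x_SG by blast
    ultimately have "T \<subseteq> S" "S \<subseteq> VI" "a \<in> S"
      using B(1) by (auto simp: mem_SG_iff)
    then show ?thesis
      using \<open>S \<in> x\<close> by blast
  qed
  moreover have "VI \<in> SG VI"
    using \<open>VI \<noteq> {}\<close> by (simp add: mem_SG_iff)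
  ultimately have "VI \<in> rho_TSD VI k x"
    unfolding mem_rho_TSD_iff by blast
  then show ?thesis
    using x_fixed by simp
qed

lemma VI_in_TSD_above_avoiding:
  assumes fin: "finite VI" and k: "1 \<le> k" "k \<le> card VI" and T: "T \<in> tuples k VI"
    and y: "y \<in> TSD VI k" "avoiding VI T \<subset> y"
  shows "VI \<in> y"
proof (rule VI_in_TSD_if_covers_tuples[OF fin _ k(2) y(1)])
  show "VI \<noteq> {}"
    using k by auto
  obtain S where S: "S \<in> y" "S \<notin> avoiding VI T"
    using y(2) by blast
  then have "T \<subseteq> S"
    using y(1) by (auto simp: TSD_iff_fixpoint avoiding_def)
  fix T' assume T': "T' \<in> tuples k VI"
  show "\<exists>S\<in>y. T' \<subseteq> S"
  proof (cases "T \<subseteq> T'")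
    case True
    then have "T = T'"
      by (rule tuple_eq_if_subset[OF T T' _ k(1)])
    then show ?thesis
      using \<open>T \<subseteq> S\<close> S(1) by blast
  next
    case False
    have "T' \<in> SG VI"
      using T' k(1) by (auto simp: tuples_def mem_SG_iff)
    then have "T' \<in> y"
      using False y(2) unfolding avoiding_def by blast
    then show ?thesis
      by blast
  qed
qed

lemma MI_TSD_eq_avoiding:
  assumes fin: "finite VI" and k: "1 \<le> k" "k \<le> card VI"
    and x: "x \<in> MI (TSD VI k)" "VI \<notin> x"
  shows "\<exists>T\<in>tuples k VI. x = avoiding VI T"
proof -
  have "VI \<noteq> {}"
    using k by auto
  have x_TSD: "x \<in> TSD VI k"
    and irreducible: "\<And>y z. y \<in> TSD VI k \<Longrightarrow> z \<in> TSD VI k \<Longrightarrow>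
      is_meet_in (TSD VI k) x y z \<Longrightarrow> x = y \<or> x = z"
    using x(1) by (auto simp: MI_def)
  obtain T where T: "T \<in> tuples k VI" and uncovered: "\<forall>S\<in>x. \<not> T \<subseteq> S"
    using VI_in_TSD_if_covers_tuples[OF fin \<open>VI \<noteq> {}\<close> k(2) x_TSD] x(2) by blast
  have "x \<subseteq> avoiding VI T"
    using x_TSD uncovered by (auto simp: avoiding_def TSD_iff_fixpoint)
  moreover have "VI \<notin> avoiding VI T"
    using T by (auto simp: avoiding_def tuples_def)
  ultimately have "is_meet_in (TSD VI k) x (avoiding VI T) (insert VI x)"
    using x_TSD unfolding is_meet_in_def by blast
  moreover have "avoiding VI T \<in> TSD VI k"
    using T k(1) by (intro avoiding_in_TSD) (auto simp: tuples_def)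
  ultimately have "x = avoiding VI T \<or> x = insert VI x"
    using irreducible insert_VI_in_TSD[OF x_TSD \<open>VI \<noteq> {}\<close>] by blast
  then show ?thesis
    using T x(2) by blast
qed

lemma avoiding_in_MI_TSD:
  assumes fin: "finite VI" and k: "1 \<le> k" "k \<le> card VI" and T: "T \<in> tuples k VI"
  shows "avoiding VI T \<in> MI (TSD VI k)"
proof -
  have "VI \<noteq> {}"
    using k by auto
  have "0 < card T" "card T \<le> k"
    using T k(1) by (auto simp: tuples_def)
  then have x: "avoiding VI T \<in> TSD VI k"
    by (rule avoiding_in_TSD)
  have VI_notin: "VI \<notin> avoiding VI T"
    using T by (auto simp: tuples_def avoiding_def)
  \<comment> \<open>\<open>insert VI (avoiding VI T)\<close> lies below every strictly larger element\<close>
  have "avoiding VI T = y \<or> avoiding VI T = z"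
    if y: "y \<in> TSD VI k" and z: "z \<in> TSD VI k"
      and meet: "is_meet_in (TSD VI k) (avoiding VI T) y z" for y z
  proof (rule ccontr)
    assume "\<not> (avoiding VI T = y \<or> avoiding VI T = z)"
    moreover have "avoiding VI T \<subseteq> y" "avoiding VI T \<subseteq> z"
      using meet by (simp_all add: is_meet_in_def)
    ultimately have "avoiding VI T \<subset> y" "avoiding VI T \<subset> z"
      by blast+
    then have "insert VI (avoiding VI T) \<subseteq> y" "insert VI (avoiding VI T) \<subseteq> z"
      using VI_in_TSD_above_avoiding[OF fin k T] y z by blast+
    then have "insert VI (avoiding VI T) \<subseteq> avoiding VI T"
      using meet insert_VI_in_TSD[OF x \<open>VI \<noteq> {}\<close>] unfolding is_meet_in_def by blast
    then show False
      using VI_notin by blast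
  qed
  then show ?thesis
    using x unfolding MI_def by blast
qed

lemma MI_TSD_without_VI:
  assumes "finite VI" "1 \<le> k" "k \<le> card VI"
  shows "{x \<in> MI (TSD VI k). VI \<notin> x} = avoiding VI ` tuples k VI"
proof -
  have "VI \<notin> avoiding VI T" if "T \<in> tuples k VI" for T
    using that by (auto simp: tuples_def avoiding_def)
  then show ?thesis
    using MI_TSD_eq_avoiding[OF assms] avoiding_in_MI_TSD[OF assms] by blast
qed

theorem corollary4p4:
  fixes VI :: "'a set" and n k :: nat
  assumes "finite VI" and "card VI = n" and "1 \<le> k" and "k \<le> n"
  shows "dAtoms (TS VI k) (SG VI) = {sh \<in> MI (TSD VI k). VI \<notin> sh}"
  using dAtoms_TS[of k VI] MI_TSD_without_VI[of VI k] assms by simp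

end
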